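(* Let $k\in\mathbb{R}$, $\upsilon$ a multiplier system of weight $k$, and assume $\rho:\Gamma\to GL_d(\mathbb{C})$ is an indecomposable representation such that $\mathcal{H}(k,\rho,\upsilon)\neq\{0\}$. Then $\rho(S^2)=\pm I$, and $$\mathcal{H}(\rho,\upsilon)=\bigoplus_{n\in\mathbb{Z}}\mathcal{H}(k+2n,\rho,\upsilon).$$
   Context: $\Gamma=SL(2,\mathbb{Z})$ acts on the upper half-plane $\mathbb{H}$ by Möbius transformations; $S=\begin{pmatrix}0&-1\\1&0\end{pmatrix}$. Complex powers use the principal branch of $\log$. A multiplier system of weight $k$ is a map $\upsilon:\Gamma\to\{|w|=1\}$ such that $\nu(\gamma,z)=\upsilon(\gamma)(cz+d)^k$ satisfies $\nu(\gamma\sigma,z)=\nu(\gamma,\sigma z)\nu(\sigma,z)$; it is also a multiplier system of weight $k+n$ for every $n\in\mathbb{Z}$. Slash: $(f|_k^\upsilon\gamma)(z)=\upsilon(\gamma)^{-1}(cz+d)^{-k}f(\gamma z)$. Moderate growth: $|f(x+iy)|\le y^N$ for $y>c$. $\mathcal{H}(k,\rho,\upsilon)$: column vectors $F$ of holomorphic moderate-growth functions with $F|_k^\upsilon\gamma=\rho(\gamma)F$ for all $\gamma$; $\mathcal{H}(\rho,\upsilon)=\bigoplus_{n\in\mathbb{Z}}\mathcal{H}(k+n,\rho,\upsilon)$. *)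

theory Defs
  imports "HOL-Analysis.Analysis"
begin

text \<open>Elements of SL(2,Z) are represented as quadruples (a,b,c,d) standing for the
  matrix with rows (a b) and (c d).\<close>

type_synonym mat2 = "int \<times> int \<times> int \<times> int"

definition SL2Z :: "mat2 set" where
  "SL2Z = {(a,b,c,d). a * d - b * c = 1}"

definition mmul :: "mat2 \<Rightarrow> mat2 \<Rightarrow> mat2" where
  "mmul g h = (case g of (a,b,c,d) \<Rightarrow> case h of (a',b',c',d') \<Rightarrow>
     (a*a' + b*c', a*b' + b*d', c*a' + d*c', c*b' + d*d'))"

definition S_mat :: mat2 where "S_mat = (0, -1, 1, 0)"

definition mob :: "mat2 \<Rightarrow> complex \<Rightarrow> complex" where
  "mob g z = (case g of (a,b,c,d) \<Rightarrow> (of_int a * z + of_int b) / (of_int c * z + of_int d))"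

text \<open>(cz+d)^k with the principal branch of log.\<close>
definition jfac :: "real \<Rightarrow> mat2 \<Rightarrow> complex \<Rightarrow> complex" where
  "jfac k g z = (case g of (a,b,c,d) \<Rightarrow> (of_int c * z + of_int d) powr (of_real k))"

definition upper_half :: "complex set" where "upper_half = {z. Im z > 0}"

definition multiplier_system :: "real \<Rightarrow> (mat2 \<Rightarrow> complex) \<Rightarrow> bool" where
  "multiplier_system k \<upsilon> \<longleftrightarrow>
     (\<forall>g\<in>SL2Z. norm (\<upsilon> g) = 1) \<and>
     (\<forall>g\<in>SL2Z. \<forall>h\<in>SL2Z. \<forall>z\<in>upper_half.
        \<upsilon> (mmul g h) * jfac k (mmul g h) z = (\<upsilon> g * jfac k g (mob h z)) * (\<upsilon> h * jfac k h z))"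

text \<open>A representation of SL(2,Z) in GL_d(C), d = CARD('d).\<close>
definition representation :: "(mat2 \<Rightarrow> complex^'d^'d) \<Rightarrow> bool" where
  "representation \<rho> \<longleftrightarrow>
     (\<forall>g\<in>SL2Z. invertible (\<rho> g)) \<and>
     (\<forall>g\<in>SL2Z. \<forall>h\<in>SL2Z. \<rho> (mmul g h) = \<rho> g ** \<rho> h)"

definition csubspace :: "(complex^'d) set \<Rightarrow> bool" where
  "csubspace U \<longleftrightarrow> 0 \<in> U \<and> (\<forall>x\<in>U. \<forall>y\<in>U. x + y \<in> U) \<and> (\<forall>c. \<forall>x\<in>U. c *s x \<in> U)"

definition invariant_subspace :: "(mat2 \<Rightarrow> complex^'d^'d) \<Rightarrow> (complex^'d) set \<Rightarrow> bool" where
  "invariant_subspace \<rho> U \<longleftrightarrow> csubspace U \<and> (\<forall>g\<in>SL2Z. \<forall>v\<in>U. \<rho> g *v v \<in> U)"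

definition indecomposable :: "(mat2 \<Rightarrow> complex^'d^'d) \<Rightarrow> bool" where
  "indecomposable \<rho> \<longleftrightarrow>
     \<not> (\<exists>U W. invariant_subspace \<rho> U \<and> invariant_subspace \<rho> W \<and>
             U \<noteq> {0} \<and> W \<noteq> {0} \<and> U \<inter> W = {0} \<and>
             (\<forall>v. \<exists>u\<in>U. \<exists>w\<in>W. v = u + w))"

text \<open>H(k,rho,upsilon). Functions on the upper half-plane are represented by functions
  on C that vanish outside the upper half-plane (canonical representatives).\<close>
definition mf_space :: "real \<Rightarrow> (mat2 \<Rightarrow> complex^'d^'d) \<Rightarrow> (mat2 \<Rightarrow> complex)
                         \<Rightarrow> (complex \<Rightarrow> complex^'d) set" where
  "mf_space k \<rho> \<upsilon> = {F.
     (\<forall>i. (\<lambda>z. F z $ i) holomorphic_on upper_half) \<and>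
     (\<forall>i. \<exists>N c::real. \<forall>z\<in>upper_half. Im z > c \<longrightarrow> norm (F z $ i) \<le> Im z powr N) \<and>
     (\<forall>g\<in>SL2Z. \<forall>z\<in>upper_half.
        (inverse (\<upsilon> g) * jfac (- k) g z) *s F (mob g z) = \<rho> g *v F z) \<and>
     (\<forall>z. z \<notin> upper_half \<longrightarrow> F z = 0)}"

text \<open>Formal direct sum over the index set I of the spaces H(k+n,rho,upsilon), n in I,
  as finitely supported families, sitting inside the full sum over all n in Z.\<close>
definition graded_sum :: "real \<Rightarrow> (mat2 \<Rightarrow> complex^'d^'d) \<Rightarrow> (mat2 \<Rightarrow> complex) \<Rightarrow> int set
                          \<Rightarrow> (int \<Rightarrow> complex \<Rightarrow> complex^'d) set" where
  "graded_sum k \<rho> \<upsilon> I = {G.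
     finite {n. G n \<noteq> (\<lambda>_. 0)} \<and>
     (\<forall>n\<in>I. G n \<in> mf_space (k + of_int n) \<rho> \<upsilon>) \<and>
     (\<forall>n. n \<notin> I \<longrightarrow> G n = (\<lambda>_. 0))}"

end

theory Submission
  imports Defs
begin

text \<open>The element \<open>-I = S\<^sup>2\<close> is central, so \<open>\<rho>(-I)\<close> is an involution commuting with all of \<open>\<rho>\<close>;
  its \<open>\<pm>1\<close>-eigenspaces split \<open>\<complex>\<^sup>d\<close> into invariant pieces, so by indecomposability \<open>\<rho>(-I) = \<pm>I\<close>.
  Since \<open>-I\<close> fixes every point and \<open>(-1)\<^sup>k = e\<^sup>i\<^sup>\<pi>\<^sup>k\<close>, every nonzero \<open>F \<in> H(k,\<rho>,\<upsilon>)\<close> satisfies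
  \<open>\<rho>(-I) = \<upsilon>(-I)\<^sup>-\<^sup>1 e\<^sup>-\<^sup>i\<^sup>\<pi>\<^sup>k\<close>; shifting the weight by an odd integer flips the sign of the
  right-hand side, so \<open>H(k+n,\<rho>,\<upsilon>) = 0\<close> for odd \<open>n\<close>.\<close>

abbreviation minus_I :: mat2 where "minus_I \<equiv> (-1, 0, 0, -1)"

lemma mmul_S_S: "mmul S_mat S_mat = minus_I"
  by (simp add: mmul_def S_mat_def)

lemma minus_I_SL2Z: "minus_I \<in> SL2Z" and one_SL2Z: "(1, 0, 0, 1) \<in> SL2Z"
  by (simp_all add: SL2Z_def)

lemma mmul_one: "mmul (1, 0, 0, 1) (1, 0, 0, 1) = (1, 0, 0, 1)"
  by (simp add: mmul_def)

lemma mmul_minus_I_minus_I: "mmul minus_I minus_I = (1, 0, 0, 1)"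
  by (simp add: mmul_def)

lemma mmul_minus_I_commute: "mmul minus_I g = mmul g minus_I"
  by (cases g) (simp add: mmul_def)

lemma mob_minus_I [simp]: "mob minus_I z = z"
  by (simp add: mob_def)

lemma jfac_minus_I: "jfac r minus_I z = exp (of_real r * (\<i> * pi))"
  by (simp add: jfac_def powr_def)

lemma exp_weight_odd_shift:
  assumes "odd n"
  shows "exp (of_real (- (k + of_int n)) * (\<i> * pi)) = - exp (of_real (- k) * (\<i> * pi))"
proof -
  obtain j where j: "n = 2 * j + 1" using assms by (blast elim: oddE)
  have "of_real (- (k + of_int n)) * (\<i> * pi)
      = of_real (- k) * (\<i> * pi) + of_real (2 * of_int (- j - 1) * pi) * \<i> + \<i> * pi"
    by (simp add: j algebra_simps)
  then have "exp (of_real (- (k + of_int n)) * (\<i> * pi))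
      = exp (of_real (- k) * (\<i> * pi)) * exp (of_real (2 * of_int (- j - 1) * pi) * \<i>) * exp (\<i> * pi)"
    by (simp only: exp_add)
  also have "exp (of_real (2 * of_int (- j - 1) * pi) * \<i>) = 1"
    by (rule exp_integer_2pi) simp
  finally show ?thesis by simp
qed

lemma matrix_vector_mult_uminus: "(- M) *v (x :: 'a::comm_ring_1^'n) = - (M *v x)"
  by (simp add: matrix_vector_mult_def vec_eq_iff sum_negf)

lemma representation_one:
  assumes "representation \<rho>"
  shows "\<rho> (1, 0, 0, 1) = mat 1"
proof -
  let ?P = "\<rho> (1, 0, 0, 1)"
  obtain B where B: "?P ** B = mat 1"
    using assms one_SL2Z unfolding representation_def invertible_def by blast
  have "?P ** ?P = ?P"
    using assms one_SL2Z unfolding representation_def by (metis (no_types) mmul_one)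
  then have "?P ** (?P ** B) = ?P ** B" by (simp add: matrix_mul_assoc)
  then show ?thesis using B by (simp add: matrix_mul_rid)
qed

lemma representation_minus_I_involution:
  assumes "representation \<rho>"
  shows "\<rho> minus_I ** \<rho> minus_I = mat 1"
  using assms minus_I_SL2Z representation_one[OF assms]
  unfolding representation_def by (metis mmul_minus_I_minus_I)

lemma representation_minus_I_central:
  assumes "representation \<rho>" "g \<in> SL2Z"
  shows "\<rho> minus_I ** \<rho> g = \<rho> g ** \<rho> minus_I"
  using assms minus_I_SL2Z mmul_minus_I_commute[of g] unfolding representation_def by metis

lemma invariant_subspace_eigenspace:
  assumes "\<forall>g\<in>SL2Z. A ** \<rho> g = \<rho> g ** A"
  shows "invariant_subspace \<rho> {v. A *v v = c *s v}"
  unfolding invariant_subspace_def csubspace_def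
proof (intro conjI ballI allI)
  fix g v assume g: "g \<in> SL2Z" and v: "v \<in> {v. A *v v = c *s v}"
  have "A *v (\<rho> g *v v) = \<rho> g *v (A *v v)"
    using assms g by (simp add: matrix_vector_mul_assoc)
  with v show "\<rho> g *v v \<in> {v. A *v v = c *s v}"
    by (simp add: vec.scale)
qed (auto simp: matrix_vector_right_distrib vector_scalar_commute vec.scale algebra_simps)

lemma indecomposable_central_involution:
  fixes A :: "complex^'d^'d"
  assumes "indecomposable \<rho>" "A ** A = mat 1" "\<forall>g\<in>SL2Z. A ** \<rho> g = \<rho> g ** A"
  shows "A = mat 1 \<or> A = - mat 1"
proof -
  define U where "U = {v. A *v v = 1 *s v}"
  define W where "W = {v. A *v v = (- 1) *s v}"
  have AA: "A *v (A *v v) = v" for v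
    using assms(2) by (simp add: matrix_vector_mul_assoc)
  have plus_U: "v + A *v v \<in> U" and minus_W: "v - A *v v \<in> W" for v
    by (simp_all add: U_def W_def matrix_vector_right_distrib matrix_vector_mult_diff_distrib AA)
  have "U \<inter> W = {0}"
  proof -
    have "v = 0" if "v = - v" for v :: "complex^'d"
      using that by (simp add: vec_eq_iff)
    then show ?thesis by (auto simp: U_def W_def)
  qed
  moreover have "\<forall>v. \<exists>u\<in>U. \<exists>w\<in>W. v = u + w"
  proof
    fix v :: "complex^'d"
    have "(1/2) *s (v + A *v v) \<in> U" "(1/2) *s (v - A *v v) \<in> W"
      using plus_U[of v] minus_W[of v] invariant_subspace_eigenspace[OF assms(3)]
      unfolding U_def W_def invariant_subspace_def csubspace_def by blast+
    moreover have "v = (1/2) *s (v + A *v v) + (1/2) *s (v - A *v v)"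
      by (simp add: vec_eq_iff field_simps)
    ultimately show "\<exists>u\<in>U. \<exists>w\<in>W. v = u + w" by blast
  qed
  ultimately have "U = {0} \<or> W = {0}"
    using assms(1) invariant_subspace_eigenspace[OF assms(3)]
    unfolding indecomposable_def U_def W_def by blast
  then show ?thesis
  proof
    assume "U = {0}"
    then have "A *v v = (- mat 1) *v v" for v
      using plus_U[of v] by (simp add: matrix_vector_mult_uminus eq_neg_iff_add_eq_0 add.commute)
    then show ?thesis by (simp add: matrix_eq)
  next
    assume "W = {0}"
    then have "A *v v = mat 1 *v v" for v
      using minus_W[of v] by simp
    then show ?thesis by (simp add: matrix_eq)
  qed
qed

lemma zero_mem_mf_space: "(\<lambda>_. 0) \<in> mf_space k \<rho> \<upsilon>"
  unfolding mf_space_def upper_half_def by auto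

lemma mf_space_minus_I:
  assumes "F \<in> mf_space r \<rho> \<upsilon>"
  shows "(inverse (\<upsilon> minus_I) * exp (of_real (- r) * (\<i> * pi))) *s F z = \<rho> minus_I *v F z"
proof (cases "z \<in> upper_half")
  case True
  with assms minus_I_SL2Z show ?thesis
    unfolding mf_space_def by (auto simp: jfac_minus_I)
next
  case False
  with assms show ?thesis
    unfolding mf_space_def by (simp add: matrix_vector_mult_0_right)
qed

lemma mf_space_nonzero_eigenvalue:
  assumes "\<And>v. \<rho> minus_I *v v = e *s v" "F \<in> mf_space r \<rho> \<upsilon>" "F \<noteq> (\<lambda>_. 0)"
  shows "inverse (\<upsilon> minus_I) * exp (of_real (- r) * (\<i> * pi)) = e"
proof -
  obtain z i where "F z $ i \<noteq> 0"
    using assms(3) by (metis vec_eq_iff zero_index)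
  moreover have "(inverse (\<upsilon> minus_I) * exp (of_real (- r) * (\<i> * pi))) * F z $ i = e * F z $ i"
    using mf_space_minus_I[OF assms(2), of z] assms(1) by (metis vector_scalar_mult_def vec_lambda_beta)
  ultimately show ?thesis by simp
qed

lemma mf_space_odd_weight_shift:
  assumes "\<And>v. \<rho> minus_I *v v = e *s v" "e \<noteq> 0"
    and "mf_space k \<rho> \<upsilon> \<noteq> {\<lambda>_. 0}" "odd n"
  shows "mf_space (k + of_int n) \<rho> \<upsilon> = {\<lambda>_. 0}"
proof (rule ccontr)
  assume "mf_space (k + of_int n) \<rho> \<upsilon> \<noteq> {\<lambda>_. 0}"
  then obtain G where G: "G \<in> mf_space (k + of_int n) \<rho> \<upsilon>" "G \<noteq> (\<lambda>_. 0)"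
    using zero_mem_mf_space by blast
  obtain F where F: "F \<in> mf_space k \<rho> \<upsilon>" "F \<noteq> (\<lambda>_. 0)"
    using assms(3) zero_mem_mf_space by blast
  have "e = - e"
    using mf_space_nonzero_eigenvalue[of \<rho> e, OF assms(1) G]
      mf_space_nonzero_eigenvalue[of \<rho> e, OF assms(1) F] exp_weight_odd_shift[OF assms(4), of k]
    by simp
  with assms(2) show False by simp
qed

lemma graded_sum_eq_if_vanishing:
  assumes "\<And>n. n \<notin> I \<Longrightarrow> mf_space (k + of_int n) \<rho> \<upsilon> = {\<lambda>_. 0}"
  shows "graded_sum k \<rho> \<upsilon> UNIV = graded_sum k \<rho> \<upsilon> I"
proof -
  have "(\<forall>n. G n \<in> mf_space (k + of_int n) \<rho> \<upsilon>) \<longleftrightarrow>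
        (\<forall>n\<in>I. G n \<in> mf_space (k + of_int n) \<rho> \<upsilon>) \<and> (\<forall>n. n \<notin> I \<longrightarrow> G n = (\<lambda>_. 0))" for G
    using assms zero_mem_mf_space[of "k + of_int _" \<rho> \<upsilon>] by blast
  then show ?thesis
    unfolding graded_sum_def by auto
qed

theorem lemma2p15:
  fixes k :: real
    and \<upsilon> :: "mat2 \<Rightarrow> complex"
    and \<rho> :: "mat2 \<Rightarrow> complex^'d^'d"
  assumes "multiplier_system k \<upsilon>"
    and "representation \<rho>"
    and "indecomposable \<rho>"
    and "mf_space k \<rho> \<upsilon> \<noteq> {(\<lambda>_. 0)}"
  shows "(\<rho> (mmul S_mat S_mat) = mat 1 \<or> \<rho> (mmul S_mat S_mat) = - mat 1) \<and>
         graded_sum k \<rho> \<upsilon> UNIV = graded_sum k \<rho> \<upsilon> (range (\<lambda>n. 2 * n))"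
proof -
  have sign: "\<rho> minus_I = mat 1 \<or> \<rho> minus_I = - mat 1"
    using indecomposable_central_involution[OF assms(3)] assms(2)
      representation_minus_I_involution representation_minus_I_central by blast
  obtain e :: complex where e: "\<And>v. \<rho> minus_I *v v = e *s v" "e \<noteq> 0"
  proof (cases "\<rho> minus_I = mat 1")
    case True
    then show ?thesis using that[of 1] by simp
  next
    case False
    then show ?thesis using sign that[of "- 1"] by (simp add: matrix_vector_mult_uminus)
  qed
  have "mf_space (k + of_int n) \<rho> \<upsilon> = {\<lambda>_. 0}" if "n \<notin> range (\<lambda>n. 2 * n)" for n
    using mf_space_odd_weight_shift[OF e assms(4)] that by (metis evenE rangeI)
  from graded_sum_eq_if_vanishing[OF this] sign show ?thesis
    by (simp add: mmul_S_S)
qed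

end
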